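(* Consider the two-individual system under (h1), (h2), (h3), and suppose $M>0$. Then both individuals act infinitely (countably) many times after any fixed time $t_{start}\ge0$; that is, the system is in the full action state.
   Context: Two-individual model ($n=2$): parameters $\sigma_A,\sigma_S\ge 0$, $\sigma_C>0$, $\mu_S\in[0,1]$, $\mu_C>0$, $r>0$, $\tau\in(0,1)$, $\alpha_1,\alpha_2\in(-1,1)$. States $x_i\in(-1,1)$, $y_i\in[0,1]$, with $\gamma_1=y_2$, $\gamma_2=y_1$. Between action events: $\dot x_i=[\sigma_A\alpha_i+\sigma_S(\gamma_i-\mu_S)]\,\sigma_C(\gamma_i+\mu_C)(1-x_i)(1+x_i)$, $\dot y_i=-ry_i$. Individual $i$ "acts" at time $t$ when $x_i(t)$ reaches $\tau$; immediately afterwards $x_i$ is reset to $0$ and $y_i$ to $1$, and evolution resumes. Hypotheses: (h1) $\sigma_A\alpha_1-\sigma_S\mu_S>0$; (h2) $\sigma_A\alpha_2-\sigma_S\mu_S\le0$; (h3) $x_1(0)=y_1(0)=y_2(0)=0$ and $x_2(0)\in(-1,\tau)$. Constants: $A_1=(\sigma_A\alpha_1-\sigma_S\mu_S)\sigma_C\mu_C$, $T=\tanh^{-1}(\tau)/A_1$, $A=(\sigma_A\alpha_2-\sigma_S\mu_S)\sigma_C\mu_C$, $B=-\frac1r\big[(\sigma_A\alpha_2-\sigma_S\mu_S)\sigma_C+\sigma_S\sigma_C\mu_C\big]$, $C=-\frac{\sigma_S\sigma_C}{2r}$, $M=AT+Be^{-rT}+Ce^{-2rT}-B-C$. *)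

theory Defs
  imports Complex_Main
begin

definition xrate :: "real \<Rightarrow> real \<Rightarrow> real \<Rightarrow> real \<Rightarrow> real \<Rightarrow> real \<Rightarrow> real \<Rightarrow> real \<Rightarrow> real" where
  "xrate sA sS sC mS mC alpha gamma x =
     (sA * alpha + sS * (gamma - mS)) * sC * (gamma + mC) * (1 - x) * (1 + x)"

text \<open>Individual with state x acts at time t > 0 when x reaches the threshold tau
  from the left (x(t-) = tau); the value at t itself is the post-reset value.\<close>
definition acts :: "real \<Rightarrow> (real \<Rightarrow> real) \<Rightarrow> real \<Rightarrow> bool" where
  "acts tau x t \<longleftrightarrow> 0 < t \<and> (x \<longlongrightarrow> tau) (at_left t)"

definition indiv_ok :: "real \<Rightarrow> real \<Rightarrow> real \<Rightarrow> real \<Rightarrow> real \<Rightarrow> real \<Rightarrow> real \<Rightarrow> real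
    \<Rightarrow> (real \<Rightarrow> real) \<Rightarrow> (real \<Rightarrow> real) \<Rightarrow> (real \<Rightarrow> real) \<Rightarrow> bool" where
  "indiv_ok sA sS sC mS mC r tau alpha x y gamma \<longleftrightarrow>
     (\<forall>t\<ge>0.
        x t < tau \<and>
        (x has_real_derivative xrate sA sS sC mS mC alpha (gamma t) (x t)) (at t within {t..}) \<and>
        (y has_real_derivative (- r * y t)) (at t within {t..}) \<and>
        (acts tau x t \<longrightarrow> x t = 0 \<and> y t = 1) \<and>
        (0 < t \<and> \<not> acts tau x t \<longrightarrow> isCont x t \<and> isCont y t))"

definition system2 :: "real \<Rightarrow> real \<Rightarrow> real \<Rightarrow> real \<Rightarrow> real \<Rightarrow> real \<Rightarrow> real \<Rightarrow> real \<Rightarrow> real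
    \<Rightarrow> (real \<Rightarrow> real) \<Rightarrow> (real \<Rightarrow> real) \<Rightarrow> (real \<Rightarrow> real) \<Rightarrow> (real \<Rightarrow> real) \<Rightarrow> bool" where
  "system2 sA sS sC mS mC r tau a1 a2 x1 x2 y1 y2 \<longleftrightarrow>
     indiv_ok sA sS sC mS mC r tau a1 x1 y1 y2 \<and>
     indiv_ok sA sS sC mS mC r tau a2 x2 y2 y1"

definition Mconst :: "real \<Rightarrow> real \<Rightarrow> real \<Rightarrow> real \<Rightarrow> real \<Rightarrow> real \<Rightarrow> real \<Rightarrow> real \<Rightarrow> real \<Rightarrow> real" where
  "Mconst sA sS sC mS mC r tau a1 a2 =
     (let A1 = (sA * a1 - sS * mS) * sC * mC;
          T = artanh tau / A1;
          A = (sA * a2 - sS * mS) * sC * mC;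
          B = - (1 / r) * ((sA * a2 - sS * mS) * sC + sS * sC * mC);
          C = - (sS * sC) / (2 * r)
      in A * T + B * exp (- r * T) + C * exp (- 2 * r * T) - B - C)"

end

theory Submission
  imports Defs
begin

text \<open>
  Write z_i = artanh x_i. Between events z_i has right derivative
  (sA alpha_i + sS (gamma_i - mS)) sC (gamma_i + mC), and gamma_i stays in [0,1]; so z_i never
  reaches -infinity, and by (h1) the rate of z_1 lies between A1 > 0 and some Amax. Hence
  individual 1 acts forever, consecutive actions being between artanh tau / Amax and T apart.
  Between consecutive actions s < s' of individual 1 we have gamma_2 = y_1 = exp (- r (t - s)),
  so z_2 rises by G (s' - s), where G L = A L + B exp (- r L) + C exp (- 2 r L) - B - C.
  The derivative of G changes sign at most once, from positive to negative, and G T = M > 0, so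
  G is bounded below by a positive constant on [artanh tau / Amax, T]. If individual 2 stopped
  acting, z_2 would thus grow without bound, contradicting x_2 < tau.
\<close>

lemma real_right_induction:
  fixes a b :: real and P :: "real \<Rightarrow> bool"
  assumes "a \<le> b" and "P a"
    and step: "\<And>t. a \<le> t \<Longrightarrow> t < b \<Longrightarrow> \<forall>u\<in>{a..t}. P u \<Longrightarrow> eventually P (at_right t)"
    and limit: "\<And>t. a < t \<Longrightarrow> t \<le> b \<Longrightarrow> \<forall>u\<in>{a..<t}. P u \<Longrightarrow> P t"
  shows "\<forall>t\<in>{a..b}. P t"
proof -
  define S where "S = {t\<in>{a..b}. \<forall>u\<in>{a..t}. P u}"
  define c where "c = Sup S"
  have "a \<in> S" using assms(1,2) by (auto simp: S_def)
  have "bdd_above S" by (auto simp: S_def bdd_above_def)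
  have "a \<le> c" using \<open>a \<in> S\<close> \<open>bdd_above S\<close> unfolding c_def by (rule cSup_upper)
  have "c \<le> b" unfolding c_def using \<open>a \<in> S\<close> by (intro cSup_least) (auto simp: S_def)
  have below_c: "\<forall>u\<in>{a..<c}. P u"
  proof
    fix u assume u: "u \<in> {a..<c}"
    then obtain s where "s \<in> S" "u < s"
      using \<open>a \<in> S\<close> \<open>bdd_above S\<close> less_cSup_iff[of S u] by (auto simp: c_def)
    then show "P u" using u by (auto simp: S_def)
  qed
  have "P c"
    using \<open>P a\<close> limit[of c] \<open>a \<le> c\<close> \<open>c \<le> b\<close> below_c by (cases "c = a") auto
  then have upto_c: "\<forall>u\<in>{a..c}. P u" using below_c by auto
  have "c = b"
  proof (rule ccontr)
    assume "c \<noteq> b"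
    with \<open>c \<le> b\<close> have "c < b" by simp
    obtain d where "c < d" and d: "\<And>u. c < u \<Longrightarrow> u < d \<Longrightarrow> P u"
      using step[OF \<open>a \<le> c\<close> \<open>c < b\<close> upto_c] unfolding eventually_at_right_field by blast
    define e where "e = min ((c + d) / 2) b"
    have "e \<in> S" using d upto_c \<open>c < d\<close> \<open>c < b\<close> \<open>a \<le> c\<close> by (auto simp: S_def e_def)
    then have "e \<le> c" unfolding c_def using \<open>bdd_above S\<close> by (rule cSup_upper)
    moreover have "c < e" using \<open>c < d\<close> \<open>c < b\<close> by (simp add: e_def)
    ultimately show False by simp
  qed
  then show ?thesis using upto_c by simp
qed

lemma right_deriv_gt_imp_increment_ge:
  fixes f f' :: "real \<Rightarrow> real"
  assumes "a \<le> b" and cont: "continuous_on {a..b} f"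
    and deriv: "\<And>t. a \<le> t \<Longrightarrow> t < b \<Longrightarrow> (f has_real_derivative f' t) (at t within {t..})"
    and gt: "\<And>t. a \<le> t \<Longrightarrow> t < b \<Longrightarrow> c < f' t"
  shows "c * (b - a) \<le> f b - f a"
proof -
  have "\<forall>t\<in>{a..b}. f a + c * (t - a) \<le> f t"
  proof (rule real_right_induction[OF \<open>a \<le> b\<close>])
    fix t assume t: "a \<le> t" "t < b" and IH: "\<forall>u\<in>{a..t}. f a + c * (u - a) \<le> f u"
    have "((\<lambda>u. (f u - f t) / (u - t)) \<longlongrightarrow> f' t) (at_right t)"
      using deriv[OF t] unfolding has_field_derivative_iff at_within_Ici_at_right .
    then have "eventually (\<lambda>u. c < (f u - f t) / (u - t)) (at_right t)"
      using gt[OF t] by (rule order_tendstoD)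
    moreover have "eventually (\<lambda>u. t < u) (at_right t)"
      by (simp add: eventually_at_right_less)
    ultimately show "eventually (\<lambda>u. f a + c * (u - a) \<le> f u) (at_right t)"
    proof eventually_elim
      case (elim u)
      then have "c * (u - t) < f u - f t" by (simp add: field_simps)
      moreover have "f a + c * (t - a) \<le> f t" using IH t by simp
      ultimately show ?case by (simp add: algebra_simps)
    qed
  next
    fix t assume t: "a < t" "t \<le> b" and IH: "\<forall>u\<in>{a..<t}. f a + c * (u - a) \<le> f u"
    have "continuous_on {a..t} f" using continuous_on_subset[OF cont] t by simp
    then have "(f \<longlongrightarrow> f t) (at t within {a..t})"
      using t by (simp add: continuous_on_def)
    then have "(f \<longlongrightarrow> f t) (at_left t)"
      using t by (simp add: at_within_Icc_at_left)
    moreover have "eventually (\<lambda>u. f a + c * (u - a) \<le> f u) (at_left t)"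
      unfolding eventually_at_left_field using t IH by (intro exI[of _ a]) auto
    moreover have "((\<lambda>u. f a + c * (u - a)) \<longlongrightarrow> f a + c * (t - a)) (at_left t)"
      by (intro tendsto_intros)
    ultimately show "f a + c * (t - a) \<le> f t"
      by (intro tendsto_le[OF trivial_limit_at_left_real])
  qed simp
  then have "f a + c * (b - a) \<le> f b" using \<open>a \<le> b\<close> by simp
  then show ?thesis by simp
qed

lemma right_deriv_nonneg_imp_le:
  fixes f f' :: "real \<Rightarrow> real"
  assumes "a \<le> b" "continuous_on {a..b} f"
    and "\<And>t. a \<le> t \<Longrightarrow> t < b \<Longrightarrow> (f has_real_derivative f' t) (at t within {t..})"
    and "\<And>t. a \<le> t \<Longrightarrow> t < b \<Longrightarrow> 0 \<le> f' t"
  shows "f a \<le> f b"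
proof (cases "a = b")
  case False
  with \<open>a \<le> b\<close> have "0 < b - a" by simp
  show ?thesis
  proof (rule field_le_epsilon)
    fix e :: real assume "0 < e"
    have "- (e / (b - a)) * (b - a) \<le> f b - f a"
    proof (rule right_deriv_gt_imp_increment_ge[where f' = f'])
      fix t assume t: "a \<le> t" "t < b"
      have "0 < e / (b - a)" using \<open>0 < e\<close> \<open>0 < b - a\<close> by simp
      with assms(4)[OF t] show "- (e / (b - a)) < f' t" by linarith
    qed (use assms in auto)
    then show "f a \<le> f b + e" using \<open>0 < b - a\<close> by simp
  qed
qed simp

lemma right_deriv_le_imp_increment_le:
  fixes f g f' g' :: "real \<Rightarrow> real"
  assumes "a \<le> b" "continuous_on {a..b} f" "continuous_on {a..b} g"
    and "\<And>t. a \<le> t \<Longrightarrow> t < b \<Longrightarrow> (f has_real_derivative f' t) (at t within {t..})"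
    and "\<And>t. a \<le> t \<Longrightarrow> t < b \<Longrightarrow> (g has_real_derivative g' t) (at t within {t..})"
    and "\<And>t. a \<le> t \<Longrightarrow> t < b \<Longrightarrow> f' t \<le> g' t"
  shows "f b - f a \<le> g b - g a"
proof -
  have "g a - f a \<le> g b - f b"
  proof (rule right_deriv_nonneg_imp_le[where f = "\<lambda>t. g t - f t" and f' = "\<lambda>t. g' t - f' t"])
    show "continuous_on {a..b} (\<lambda>t. g t - f t)"
      using assms(2,3) by (intro continuous_on_diff)
    fix t assume "a \<le> t" "t < b"
    then show "((\<lambda>t. g t - f t) has_real_derivative g' t - f' t) (at t within {t..})"
      and "0 \<le> g' t - f' t"
      using assms(4-6) by (auto intro: DERIV_diff)
  qed fact
  then show ?thesis by simp
qed

lemma right_deriv_exp_decay: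
  fixes y :: "real \<Rightarrow> real"
  assumes "a \<le> b" "continuous_on {a..b} y"
    and deriv: "\<And>t. a \<le> t \<Longrightarrow> t < b \<Longrightarrow> (y has_real_derivative - r * y t) (at t within {t..})"
  shows "y b = y a * exp (- r * (b - a))"
proof -
  define z where "z t = y t * exp (r * t)" for t
  have "continuous_on {a..b} z"
    unfolding z_def using assms(2) by (intro continuous_intros)
  moreover have "(z has_real_derivative 0) (at t within {t..})" if "a \<le> t" "t < b" for t
  proof -
    have "(z has_real_derivative - r * y t * exp (r * t) + y t * (exp (r * t) * r)) (at t within {t..})"
      unfolding z_def using that by (auto intro!: derivative_eq_intros deriv)
    then show ?thesis by simp
  qed
  ultimately have "z b - z a \<le> 0 - 0" "0 - 0 \<le> z b - z a"
    using right_deriv_le_imp_increment_le[OF \<open>a \<le> b\<close>, of z "\<lambda>_. 0" "\<lambda>_. 0" "\<lambda>_. 0"]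
      right_deriv_le_imp_increment_le[OF \<open>a \<le> b\<close>, of "\<lambda>_. 0" z "\<lambda>_. 0" "\<lambda>_. 0"]
    by auto
  then have "y b * exp (r * b) = y a * exp (r * a)" by (simp add: z_def)
  then have "y b = y a * (exp (r * a) / exp (r * b))" by (simp add: field_simps)
  also have "exp (r * a) / exp (r * b) = exp (- r * (b - a))"
    by (simp add: exp_diff[symmetric] algebra_simps)
  finally show ?thesis .
qed

lemma continuous_on_Icc_if_right_cont_isCont:
  fixes f :: "real \<Rightarrow> 'a::topological_space"
  assumes "(f \<longlongrightarrow> f a) (at_right a)" and "\<And>u. a < u \<Longrightarrow> u \<le> b \<Longrightarrow> isCont f u"
  shows "continuous_on {a..b} f"
  unfolding continuous_on_eq_continuous_within
proof
  fix u assume u: "u \<in> {a..b}"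
  show "continuous (at u within {a..b}) f"
  proof (cases "u = a")
    case True
    have "(f \<longlongrightarrow> f u) (at u within {u..})"
      using assms(1) True by (simp add: at_within_Ici_at_right)
    then show ?thesis
      unfolding continuous_within by (rule tendsto_within_subset) (use True in auto)
  next
    case False
    then show ?thesis using assms(2) u by (simp add: continuous_at_imp_continuous_at_within)
  qed
qed

lemma tanh_artanh_real:
  fixes x :: real
  assumes "-1 < x" "x < 1"
  shows "tanh (artanh x) = x"
proof -
  have "exp (- 2 * artanh x) = inverse ((1 + x) / (1 - x))"
    using assms by (simp add: artanh_def exp_minus)
  also have "\<dots> = (1 - x) / (1 + x)" by simp
  finally have e: "exp (- 2 * artanh x) = (1 - x) / (1 + x)" .
  show ?thesis
    unfolding tanh_real_altdef e using assms by (simp add: field_simps)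
qed

lemma artanh_real_le_iff:
  fixes x y :: real
  assumes "-1 < x" "x < 1" "-1 < y" "y < 1"
  shows "artanh x \<le> artanh y \<longleftrightarrow> x \<le> y"
  by (metis assms tanh_artanh_real tanh_real_le_iff)

lemma artanh_real_less_iff:
  fixes x y :: real
  assumes "-1 < x" "x < 1" "-1 < y" "y < 1"
  shows "artanh x < artanh y \<longleftrightarrow> x < y"
  by (metis assms tanh_artanh_real tanh_real_less_iff)

lemma deriv_antimono_factor_endpoint_bound:
  fixes G s p :: "real \<Rightarrow> real"
  assumes "a < L" "L \<le> b"
    and deriv: "\<And>v. a \<le> v \<Longrightarrow> v \<le> b \<Longrightarrow> (G has_real_derivative s v * p v) (at v)"
    and p_pos: "\<And>v. a \<le> v \<Longrightarrow> v \<le> b \<Longrightarrow> 0 < p v"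
    and "antimono_on {a..b} s"
  shows "G a < G L \<or> G b \<le> G L"
proof (cases "0 < s L")
  case True
  have "G a < G L"
  proof (rule DERIV_pos_imp_increasing[OF \<open>a < L\<close>])
    fix v assume "a \<le> v" "v \<le> L"
    then have "0 < s v" using True \<open>antimono_on {a..b} s\<close> \<open>L \<le> b\<close>
      by (smt (verit) atLeastAtMost_iff monotone_onD)
    then show "\<exists>y. DERIV G v :> y \<and> 0 < y"
      using deriv p_pos \<open>a \<le> v\<close> \<open>v \<le> L\<close> \<open>L \<le> b\<close> by force
  qed
  then show ?thesis ..
next
  case False
  have "G b \<le> G L"
  proof (rule DERIV_nonpos_imp_nonincreasing[OF \<open>L \<le> b\<close>])
    fix v assume "L \<le> v" "v \<le> b"
    then have "s v \<le> 0" using False \<open>antimono_on {a..b} s\<close> \<open>a < L\<close>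
      by (smt (verit) atLeastAtMost_iff monotone_onD)
    then show "\<exists>y. DERIV G v :> y \<and> y \<le> 0"
      using deriv p_pos \<open>a < L\<close> \<open>L \<le> v\<close> \<open>v \<le> b\<close>
      by (metis less_le_trans less_imp_le mult_nonpos_nonneg order_trans)
  qed
  then show ?thesis ..
qed

lemma infinite_if_unbounded:
  fixes P :: "real \<Rightarrow> bool"
  assumes "\<And>t0. \<exists>t\<ge>t0. P t"
  shows "infinite {t. P t \<and> t1 \<le> t}"
proof
  assume "finite {t. P t \<and> t1 \<le> t}"
  then have "bdd_above {t. P t \<and> t1 \<le> t}" by (rule bdd_above_finite)
  then obtain B where B: "\<And>t. P t \<Longrightarrow> t1 \<le> t \<Longrightarrow> t \<le> B"
    unfolding bdd_above_def by auto
  obtain t where "max B t1 + 1 \<le> t" "P t" using assms by blast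
  with B[of t] show False by linarith
qed

locale hybrid_individual =
  fixes sA sS sC mS mC r tau alpha :: real and x y g :: "real \<Rightarrow> real"
  assumes ok: "indiv_ok sA sS sC mS mC r tau alpha x y g"
    and tau_pos: "0 < tau" and tau_less_1: "tau < 1" and r_pos: "0 < r"
begin

definition rate :: "real \<Rightarrow> real" where
  "rate t = (sA * alpha + sS * (g t - mS)) * sC * (g t + mC)"

lemma x_less_tau: "0 \<le> t \<Longrightarrow> x t < tau"
  and x_right_deriv:
    "0 \<le> t \<Longrightarrow> (x has_real_derivative xrate sA sS sC mS mC alpha (g t) (x t)) (at t within {t..})"
  and y_right_deriv: "0 \<le> t \<Longrightarrow> (y has_real_derivative - r * y t) (at t within {t..})"
  and reset: "0 \<le> t \<Longrightarrow> acts tau x t \<Longrightarrow> x t = 0 \<and> y t = 1"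
  and isCont_if_no_act: "0 < t \<Longrightarrow> \<not> acts tau x t \<Longrightarrow> isCont x t \<and> isCont y t"
  using ok by (simp_all add: indiv_ok_def)

lemma x_right_cont: "0 \<le> t \<Longrightarrow> (x \<longlongrightarrow> x t) (at_right t)"
  using DERIV_continuous[OF x_right_deriv] by (simp add: continuous_within at_within_Ici_at_right)

lemma y_right_cont: "0 \<le> t \<Longrightarrow> (y \<longlongrightarrow> y t) (at_right t)"
  using DERIV_continuous[OF y_right_deriv] by (simp add: continuous_within at_within_Ici_at_right)

text \<open>x is close to tau just before an action time and 0 at it; right continuity at t
  forbids such a jump close to t.\<close>
lemma eventually_no_act_at_right:
  assumes "0 \<le> t"
  shows "eventually (\<lambda>u. \<not> acts tau x u) (at_right t)"
proof -
  have "eventually (\<lambda>u. dist (x u) (x t) < tau / 3) (at_right t)"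
    using tendstoD[OF x_right_cont[OF assms], of "tau / 3"] tau_pos by simp
  then obtain b where "t < b" and near: "\<And>u. t < u \<Longrightarrow> u < b \<Longrightarrow> dist (x u) (x t) < tau / 3"
    unfolding eventually_at_right_field by blast
  show ?thesis
    unfolding eventually_at_right_field
  proof (intro exI[of _ b] conjI allI impI notI)
    fix u assume u: "t < u" "u < b" and act: "acts tau x u"
    have "x u = 0" using reset[OF _ act] u assms by simp
    have "(x \<longlongrightarrow> tau) (at_left u)" using act by (simp add: acts_def)
    then have "eventually (\<lambda>v. dist (x v) tau < tau / 3) (at_left u)"
      using tendstoD[of x tau "at_left u" "tau / 3"] tau_pos by simp
    moreover have "eventually (\<lambda>v. t < v \<and> v < u) (at_left u)"
      unfolding eventually_at_left_field using u by (intro exI[of _ t]) auto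
    ultimately have "eventually (\<lambda>v. dist (x v) tau < tau / 3 \<and> t < v \<and> v < u) (at_left u)"
      by (rule eventually_conj)
    then obtain v where "dist (x v) tau < tau / 3" "t < v" "v < u"
      using eventually_happens'[OF trivial_limit_at_left_real] by blast
    with near[of v] near[of u] u \<open>x u = 0\<close> show False
      by (simp add: dist_real_def abs_if split: if_splits)
  qed (fact \<open>t < b\<close>)
qed

lemma first_act_after:
  assumes "0 \<le> s" "s < t" "acts tau x t"
  obtains t' where "s < t'" "acts tau x t'" "\<forall>u\<in>{s<..<t'}. \<not> acts tau x u"
proof -
  define A where "A = {t. s < t \<and> acts tau x t}"
  define m where "m = Inf A"
  have "A \<noteq> {}" using assms by (auto simp: A_def)
  have "bdd_below A" by (rule bdd_belowI[of _ s]) (auto simp: A_def)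
  have "s \<le> m" unfolding m_def using \<open>A \<noteq> {}\<close> by (intro cInf_greatest) (auto simp: A_def)
  have "m \<in> A"
  proof (rule ccontr)
    assume "m \<notin> A"
    obtain d where "m < d" and quiet: "\<And>u. m < u \<Longrightarrow> u < d \<Longrightarrow> \<not> acts tau x u"
      using eventually_no_act_at_right[of m] \<open>0 \<le> s\<close> \<open>s \<le> m\<close>
      unfolding eventually_at_right_field by auto
    obtain t where "t \<in> A" "t < d"
      using \<open>A \<noteq> {}\<close> \<open>bdd_below A\<close> cInf_less_iff[of A d] \<open>m < d\<close> by (auto simp: m_def)
    moreover have "m \<le> t" unfolding m_def using \<open>t \<in> A\<close> \<open>bdd_below A\<close> by (rule cInf_lower)
    ultimately show False using quiet[of t] \<open>m \<notin> A\<close> by (cases "m = t") (auto simp: A_def)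
  qed
  moreover have "\<not> acts tau x u" if "s < u" "u < m" for u
    using cInf_lower[of u A] \<open>bdd_below A\<close> that by (auto simp: A_def m_def)
  ultimately show ?thesis using that by (auto simp: A_def)
qed

lemma continuous_on_x_y:
  assumes "0 \<le> a" "\<forall>u\<in>{a<..b}. \<not> acts tau x u"
  shows "continuous_on {a..b} x" "continuous_on {a..b} y"
  using assms x_right_cont y_right_cont isCont_if_no_act
  by (auto intro!: continuous_on_Icc_if_right_cont_isCont)

lemma y_decay:
  assumes "0 \<le> a" "a \<le> b" "\<forall>u\<in>{a<..b}. \<not> acts tau x u"
  shows "y b = y a * exp (- r * (b - a))"
  using assms continuous_on_x_y(2) y_right_deriv by (intro right_deriv_exp_decay) auto

lemma y_in_unit_interval:
  assumes "y 0 \<in> {0..1}" "0 \<le> t"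
  shows "y t \<in> {0..1}"
proof -
  have "\<forall>u\<in>{0..t}. y u \<in> {0..1}"
  proof (rule real_right_induction[OF \<open>0 \<le> t\<close>])
    fix s assume s: "0 \<le> s" "s < t" and IH: "\<forall>u\<in>{0..s}. y u \<in> {0..1}"
    obtain d where "s < d" and quiet: "\<And>u. s < u \<Longrightarrow> u < d \<Longrightarrow> \<not> acts tau x u"
      using eventually_no_act_at_right[OF \<open>0 \<le> s\<close>] unfolding eventually_at_right_field by blast
    show "eventually (\<lambda>u. y u \<in> {0..1}) (at_right s)"
      unfolding eventually_at_right_field
    proof (intro exI[of _ d] conjI allI impI)
      fix u assume u: "s < u" "u < d"
      then have "y u = y s * exp (- r * (u - s))" using s quiet by (intro y_decay) auto
      moreover have "exp (- r * (u - s)) \<le> 1" using r_pos u by simp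
      ultimately show "y u \<in> {0..1}" using IH s by (auto simp: mult_le_one)
    qed fact
  next
    fix s assume s: "0 < s" "s \<le> t" and IH: "\<forall>u\<in>{0..<s}. y u \<in> {0..1}"
    show "y s \<in> {0..1}"
    proof (cases "acts tau x s")
      case True
      then show ?thesis using reset[of s] s by simp
    next
      case False
      then have "(y \<longlongrightarrow> y s) (at_left s)"
        using isCont_if_no_act[OF \<open>0 < s\<close>] by (simp add: isCont_def filterlim_at_split)
      moreover have "eventually (\<lambda>u. y u \<in> {0..1}) (at_left s)"
        unfolding eventually_at_left_field using s IH by (intro exI[of _ 0]) auto
      ultimately show ?thesis
        by (auto intro: tendsto_lowerbound tendsto_upperbound elim: eventually_mono)
    qed
  qed (use assms in simp)
  then show ?thesis using \<open>0 \<le> t\<close> by simp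
qed

lemma artanh_x_right_deriv:
  assumes "0 \<le> t" "-1 < x t"
  shows "((\<lambda>v. artanh (x v)) has_real_derivative rate t) (at t within {t..})"
proof -
  have "x t < 1" using x_less_tau[OF assms(1)] tau_less_1 by simp
  then have "\<bar>x t\<bar> < 1" using assms(2) by simp
  then have "(x t)\<^sup>2 < 1" by (simp add: abs_square_less_1)
  then have "1 - (x t)\<^sup>2 \<noteq> 0" by simp
  have "xrate sA sS sC mS mC alpha (g t) (x t) = rate t * (1 - (x t)\<^sup>2)"
    by (simp add: xrate_def rate_def power2_eq_square algebra_simps)
  with DERIV_chain2[OF artanh_real_has_field_derivative[OF \<open>\<bar>x t\<bar> < 1\<close>] x_right_deriv[OF assms(1)]]
  show ?thesis using \<open>1 - (x t)\<^sup>2 \<noteq> 0\<close> by simp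
qed

lemma continuous_on_artanh_x:
  assumes "0 \<le> a" "\<forall>u\<in>{a<..b}. \<not> acts tau x u" "\<forall>v\<in>{a..b}. -1 < x v"
  shows "continuous_on {a..b} (\<lambda>v. artanh (x v))"
proof (rule continuous_on_artanh')
  show "continuous_on {a..b} x" using assms(1,2) by (rule continuous_on_x_y)
  show "x v \<in> {-1<..<1}" if "v \<in> {a..b}" for v
    using that assms(1,3) x_less_tau[of v] tau_less_1 by auto
qed

lemma artanh_x_increment_ge:
  assumes "0 \<le> a" "a \<le> b" "\<forall>u\<in>{a<..b}. \<not> acts tau x u" "\<forall>v\<in>{a..b}. -1 < x v"
    and "continuous_on {a..b} h"
    and "\<And>v. a \<le> v \<Longrightarrow> v < b \<Longrightarrow> (h has_real_derivative h' v) (at v within {v..})"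
    and "\<And>v. a \<le> v \<Longrightarrow> v < b \<Longrightarrow> h' v \<le> rate v"
  shows "h b - h a \<le> artanh (x b) - artanh (x a)"
  using assms continuous_on_artanh_x artanh_x_right_deriv
  by (intro right_deriv_le_imp_increment_le[where g' = rate]) auto

lemma artanh_x_increment_le:
  assumes "0 \<le> a" "a \<le> b" "\<forall>u\<in>{a<..b}. \<not> acts tau x u" "\<forall>v\<in>{a..b}. -1 < x v"
    and "continuous_on {a..b} h"
    and "\<And>v. a \<le> v \<Longrightarrow> v < b \<Longrightarrow> (h has_real_derivative h' v) (at v within {v..})"
    and "\<And>v. a \<le> v \<Longrightarrow> v < b \<Longrightarrow> rate v \<le> h' v"
  shows "artanh (x b) - artanh (x a) \<le> h b - h a"
  using assms continuous_on_artanh_x artanh_x_right_deriv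
  by (intro right_deriv_le_imp_increment_le[where f' = rate]) auto

lemma rate_bounded:
  assumes "\<And>t. 0 \<le> t \<Longrightarrow> g t \<in> {0..1}"
  obtains K where "\<And>t. 0 \<le> t \<Longrightarrow> \<bar>rate t\<bar> \<le> K"
proof -
  define p where "p \<gamma> = \<bar>(sA * alpha + sS * (\<gamma> - mS)) * sC * (\<gamma> + mC)\<bar>" for \<gamma> :: real
  have "continuous_on {0..1} p" unfolding p_def by (intro continuous_intros)
  then obtain \<gamma>\<^sub>0 where "\<forall>\<gamma>\<in>{0..1}. p \<gamma> \<le> p \<gamma>\<^sub>0"
    using continuous_attains_sup[OF compact_Icc, of 0 1 p] by auto
  then show ?thesis using that[of "p \<gamma>\<^sub>0"] assms by (simp add: rate_def p_def)
qed

lemma artanh_x_eventually_ge: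
  assumes K: "\<And>t. 0 \<le> t \<Longrightarrow> \<bar>rate t\<bar> \<le> K" and "0 \<le> s" "-1 < x s"
  shows "eventually (\<lambda>u. -1 < x u \<and> artanh (x s) - K * (u - s) \<le> artanh (x u)) (at_right s)"
proof -
  have "eventually (\<lambda>u. \<not> acts tau x u \<and> -1 < x u) (at_right s)"
    using eventually_no_act_at_right[OF \<open>0 \<le> s\<close>]
      order_tendstoD(1)[OF x_right_cont[OF \<open>0 \<le> s\<close>] \<open>-1 < x s\<close>]
    by (rule eventually_conj)
  then obtain d where "s < d" and d: "\<And>u. s < u \<Longrightarrow> u < d \<Longrightarrow> \<not> acts tau x u \<and> -1 < x u"
    unfolding eventually_at_right_field by blast
  have "-1 < x u \<and> artanh (x s) - K * (u - s) \<le> artanh (x u)" if u: "s < u" "u < d" for u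
  proof -
    have "- K * u - - K * s \<le> artanh (x u) - artanh (x s)"
    proof (rule artanh_x_increment_ge[where h' = "\<lambda>_. - K"])
      show "\<forall>w\<in>{s<..u}. \<not> acts tau x w" "\<forall>v\<in>{s..u}. -1 < x v"
        using d u \<open>-1 < x s\<close> by (auto simp: le_less)
      fix v assume "s \<le> v" "v < u"
      then show "- K \<le> rate v" using K[of v] \<open>0 \<le> s\<close> by (simp add: abs_le_iff)
    qed (use \<open>0 \<le> s\<close> u in \<open>auto intro!: derivative_eq_intros continuous_intros\<close>)
    then show ?thesis using d u by (simp add: algebra_simps)
  qed
  then show ?thesis unfolding eventually_at_right_field using \<open>s < d\<close> by blast
qed

lemma lower_barrier_persists:
  assumes "0 < s" "(h \<longlongrightarrow> h s) (at_left s)" "h s \<le> 0" "eventually (\<lambda>u. h u \<le> x u) (at_left s)"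
  shows "h s \<le> x s"
proof (cases "acts tau x s")
  case True
  then show ?thesis using reset[of s] assms(1,3) by simp
next
  case False
  then have "(x \<longlongrightarrow> x s) (at_left s)"
    using isCont_if_no_act[OF assms(1)] by (simp add: isCont_def filterlim_at_split)
  with assms(2,4) show ?thesis by (intro tendsto_le[OF trivial_limit_at_left_real])
qed

lemma x_greater_neg1:
  assumes "\<And>t. 0 \<le> t \<Longrightarrow> g t \<in> {0..1}" "-1 < x 0" "0 \<le> t"
  shows "-1 < x t"
proof -
  obtain K where K: "\<And>t. 0 \<le> t \<Longrightarrow> \<bar>rate t\<bar> \<le> K" using rate_bounded assms(1) by blast
  then have "0 \<le> K" by (meson abs_ge_zero order_trans order_refl)
  define L where "L = min (artanh (x 0)) 0"
  \<comment> \<open>artanh x falls at most at rate K, and a reset to 0 stays above the barrier L - K u.\<close>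
  have "\<forall>u\<in>{0..t}. tanh (L - K * u) \<le> x u"
  proof (rule real_right_induction[OF \<open>0 \<le> t\<close>])
    have "tanh L \<le> tanh (artanh (x 0))" by (simp add: L_def)
    moreover have "x 0 < 1" using x_less_tau[of 0] tau_less_1 by simp
    ultimately show "tanh (L - K * 0) \<le> x 0" using tanh_artanh_real assms(2) by simp
  next
    fix s assume s: "0 \<le> s" "s < t" and IH: "\<forall>u\<in>{0..s}. tanh (L - K * u) \<le> x u"
    then have "tanh (L - K * s) \<le> x s" by simp
    then have "-1 < x s" using tanh_real_gt_neg1[of "L - K * s"] by linarith
    have "L - K * s \<le> artanh (x s)"
      using artanh_real_le_iff[of "tanh (L - K * s)" "x s"] \<open>tanh (L - K * s) \<le> x s\<close> \<open>-1 < x s\<close>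
        x_less_tau[OF s(1)] tau_less_1 tanh_real_bounds[of "L - K * s"]
      by (simp add: artanh_tanh_real)
    have "eventually (\<lambda>u. -1 < x u \<and> artanh (x s) - K * (u - s) \<le> artanh (x u)) (at_right s)"
      by (rule artanh_x_eventually_ge) (use K s(1) \<open>-1 < x s\<close> in auto)
    moreover have "eventually (\<lambda>u. 0 \<le> u) (at_right s)"
      using eventually_at_right_less[of s] s(1) by (auto elim: eventually_mono)
    ultimately show "eventually (\<lambda>u. tanh (L - K * u) \<le> x u) (at_right s)"
    proof eventually_elim
      case (elim u)
      with \<open>L - K * s \<le> artanh (x s)\<close> have "tanh (L - K * u) \<le> tanh (artanh (x u))"
        by (simp add: algebra_simps)
      moreover have "x u < 1" using x_less_tau[of u] tau_less_1 elim by simp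
      ultimately show ?case using tanh_artanh_real elim by simp
    qed
  next
    fix s assume s: "0 < s" "s \<le> t" and IH: "\<forall>u\<in>{0..<s}. tanh (L - K * u) \<le> x u"
    have "L \<le> 0" "0 \<le> K * s" using \<open>0 \<le> K\<close> s by (simp_all add: L_def)
    then have "tanh (L - K * s) \<le> 0" by simp
    moreover have "((\<lambda>u. tanh (L - K * u)) \<longlongrightarrow> tanh (L - K * s)) (at_left s)"
      by (intro tendsto_intros) simp
    moreover have "eventually (\<lambda>u. tanh (L - K * u) \<le> x u) (at_left s)"
      unfolding eventually_at_left_field using s IH by (intro exI[of _ 0]) auto
    ultimately show "tanh (L - K * s) \<le> x s"
      using \<open>0 < s\<close> by (intro lower_barrier_persists[where h = "\<lambda>u. tanh (L - K * u)"])
  qed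
  then have "tanh (L - K * t) \<le> x t" using \<open>0 \<le> t\<close> by simp
  then show ?thesis using tanh_real_gt_neg1[of "L - K * t"] by linarith
qed

end

locale two_individuals =
  fixes sA sS sC mS mC r tau a1 a2 :: real and x1 x2 y1 y2 :: "real \<Rightarrow> real"
  assumes sS: "0 \<le> sS" and sC: "0 < sC" and mC: "0 < mC" and r: "0 < r"
    and tau: "0 < tau" "tau < 1"
    and h1: "0 < sA * a1 - sS * mS"
    and init: "x1 0 = 0" "y1 0 = 0" "y2 0 = 0" "-1 < x2 0"
    and sys: "system2 sA sS sC mS mC r tau a1 a2 x1 x2 y1 y2"
    and M_pos: "0 < Mconst sA sS sC mS mC r tau a1 a2"

sublocale two_individuals \<subseteq> I1: hybrid_individual sA sS sC mS mC r tau a1 x1 y1 y2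
  using sys tau r by unfold_locales (auto simp: system2_def)

sublocale two_individuals \<subseteq> I2: hybrid_individual sA sS sC mS mC r tau a2 x2 y2 y1
  using sys tau r by unfold_locales (auto simp: system2_def)

context two_individuals
begin

lemma y1_unit: "0 \<le> t \<Longrightarrow> y1 t \<in> {0..1}"
  and y2_unit: "0 \<le> t \<Longrightarrow> y2 t \<in> {0..1}"
  using I1.y_in_unit_interval I2.y_in_unit_interval init by simp_all

lemma x1_greater_neg1: "0 \<le> t \<Longrightarrow> -1 < x1 t"
  and x2_greater_neg1: "0 \<le> t \<Longrightarrow> -1 < x2 t"
  using I1.x_greater_neg1[OF y2_unit] I2.x_greater_neg1[OF y1_unit] init by simp_all

lemma artanh_x1_less: "0 \<le> t \<Longrightarrow> artanh (x1 t) < artanh tau"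
  using x1_greater_neg1[of t] I1.x_less_tau[of t] tau by (simp add: artanh_real_less_iff)

lemma artanh_x2_less: "0 \<le> t \<Longrightarrow> artanh (x2 t) < artanh tau"
  using x2_greater_neg1[of t] I2.x_less_tau[of t] tau by (simp add: artanh_real_less_iff)

lemma artanh_tau_pos: "0 < artanh tau"
  using artanh_real_less_iff[of 0 tau] tau by simp

definition A1 :: real where "A1 = (sA * a1 - sS * mS) * sC * mC"
definition Amax :: real where "Amax = (sA * a1 - sS * mS + sS) * sC * (1 + mC)"
definition T :: real where "T = artanh tau / A1"
definition T_min :: real where "T_min = artanh tau / Amax"

lemma A1_pos: "0 < A1"
  using h1 sC mC by (simp add: A1_def)

lemma A1_le_Amax: "A1 \<le> Amax"
proof -
  have "(sA * a1 - sS * mS) * (sC * mC) \<le> (sA * a1 - sS * mS + sS) * (sC * (1 + mC))"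
    using h1 sS sC mC by (intro mult_mono) auto
  then show ?thesis by (simp add: A1_def Amax_def mult.assoc)
qed

lemma T_min_pos: "0 < T_min" and T_min_le_T: "T_min \<le> T"
  using artanh_tau_pos A1_pos A1_le_Amax by (simp_all add: T_min_def T_def frac_le)

lemma rate1_bounds:
  assumes "0 \<le> t"
  shows "A1 \<le> I1.rate t" "I1.rate t \<le> Amax"
proof -
  have "0 \<le> y2 t" "y2 t \<le> 1" using y2_unit[OF assms] by auto
  then have "sA * a1 - sS * mS \<le> sA * a1 + sS * (y2 t - mS)"
    and "sA * a1 + sS * (y2 t - mS) \<le> sA * a1 - sS * mS + sS"
    and "sC * mC \<le> sC * (y2 t + mC)" "sC * (y2 t + mC) \<le> sC * (1 + mC)"
    using sS sC by (auto simp: algebra_simps mult_left_le)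
  then have "(sA * a1 - sS * mS) * (sC * mC) \<le> (sA * a1 + sS * (y2 t - mS)) * (sC * (y2 t + mC))"
    and "(sA * a1 + sS * (y2 t - mS)) * (sC * (y2 t + mC)) \<le> (sA * a1 - sS * mS + sS) * (sC * (1 + mC))"
    using h1 sC mC \<open>0 \<le> y2 t\<close> by (intro mult_mono; simp)+
  then show "A1 \<le> I1.rate t" "I1.rate t \<le> Amax"
    by (simp_all add: A1_def Amax_def I1.rate_def mult.assoc)
qed

lemma artanh_x1_increment_bounds:
  assumes "0 \<le> a" "a \<le> b" "\<forall>u\<in>{a<..b}. \<not> acts tau x1 u"
  shows "A1 * (b - a) \<le> artanh (x1 b) - artanh (x1 a)"
    and "artanh (x1 b) - artanh (x1 a) \<le> Amax * (b - a)"
proof -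
  have "\<forall>v\<in>{a..b}. -1 < x1 v" using x1_greater_neg1 assms(1) by auto
  then have "A1 * b - A1 * a \<le> artanh (x1 b) - artanh (x1 a)"
    and "artanh (x1 b) - artanh (x1 a) \<le> Amax * b - Amax * a"
    using assms rate1_bounds
    by (auto intro!: I1.artanh_x_increment_ge[where h' = "\<lambda>_. A1"]
        I1.artanh_x_increment_le[where h' = "\<lambda>_. Amax"] derivative_eq_intros continuous_intros)
  then show "A1 * (b - a) \<le> artanh (x1 b) - artanh (x1 a)"
    and "artanh (x1 b) - artanh (x1 a) \<le> Amax * (b - a)"
    by (simp_all add: algebra_simps)
qed

lemma acts1_after: "\<exists>t\<ge>t0. acts tau x1 t"
proof (rule ccontr)
  assume none: "\<not> (\<exists>t\<ge>t0. acts tau x1 t)"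
  define a where "a = max t0 0"
  define b where "b = a + (artanh tau - artanh (x1 a)) / A1"
  have "0 \<le> a" by (simp add: a_def)
  have "A1 * (b - a) = artanh tau - artanh (x1 a)" using A1_pos by (simp add: b_def)
  moreover have "a \<le> b" using artanh_x1_less[OF \<open>0 \<le> a\<close>] A1_pos by (simp add: b_def)
  then have "A1 * (b - a) \<le> artanh (x1 b) - artanh (x1 a)"
    using none \<open>0 \<le> a\<close> by (intro artanh_x1_increment_bounds(1)) (auto simp: a_def)
  ultimately show False using artanh_x1_less[of b] \<open>0 \<le> a\<close> \<open>a \<le> b\<close> by simp
qed

lemma x1_next_act:
  assumes "0 \<le> s"
  obtains s' where "s < s'" "acts tau x1 s'" "\<forall>u\<in>{s<..<s'}. \<not> acts tau x1 u"
proof -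
  obtain t where "s + 1 \<le> t" "acts tau x1 t" using acts1_after by blast
  then show ?thesis using I1.first_act_after[OF assms, of t] that by auto
qed

lemma inter_action_time_le_T:
  assumes "0 \<le> s" "s < s'" "acts tau x1 s" "\<forall>u\<in>{s<..<s'}. \<not> acts tau x1 u"
  shows "s' - s \<le> T"
proof (rule ccontr)
  assume "\<not> s' - s \<le> T"
  have "x1 s = 0" using I1.reset assms(1,3) by simp
  have "0 < T" using artanh_tau_pos A1_pos by (simp add: T_def)
  have "A1 * (s + T - s) \<le> artanh (x1 (s + T)) - artanh (x1 s)"
    using \<open>\<not> s' - s \<le> T\<close> \<open>0 < T\<close> assms by (intro artanh_x1_increment_bounds(1)) auto
  moreover have "A1 * T = artanh tau" using A1_pos by (simp add: T_def)
  ultimately show False using artanh_x1_less[of "s + T"] \<open>x1 s = 0\<close> assms(1) \<open>0 < T\<close> by simp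
qed

lemma T_min_le_inter_action_time:
  assumes "0 \<le> s" "s < s'" "acts tau x1 s" "acts tau x1 s'" "\<forall>u\<in>{s<..<s'}. \<not> acts tau x1 u"
  shows "T_min \<le> s' - s"
proof -
  have "x1 s = 0" using I1.reset assms(1,3) by simp
  have "x1 v \<le> tanh (Amax * (s' - s))" if "s < v" "v < s'" for v
  proof -
    have "artanh (x1 v) \<le> Amax * (v - s)"
      using artanh_x1_increment_bounds(2)[of s v] assms that \<open>x1 s = 0\<close> by auto
    also have "\<dots> \<le> Amax * (s' - s)" using that A1_pos A1_le_Amax by (intro mult_left_mono) auto
    finally have "tanh (artanh (x1 v)) \<le> tanh (Amax * (s' - s))" by simp
    moreover have "-1 < x1 v" "x1 v < 1"
      using x1_greater_neg1[of v] I1.x_less_tau[of v] tau assms(1) that by auto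
    ultimately show ?thesis using tanh_artanh_real by simp
  qed
  then have "eventually (\<lambda>v. x1 v \<le> tanh (Amax * (s' - s))) (at_left s')"
    unfolding eventually_at_left_field using assms(2) by blast
  with \<open>acts tau x1 s'\<close> have "tau \<le> tanh (Amax * (s' - s))"
    unfolding acts_def by (intro tendsto_upperbound[of x1 tau]) auto
  then have "artanh tau \<le> Amax * (s' - s)"
    using artanh_real_le_iff[of tau "tanh (Amax * (s' - s))"] tau tanh_real_bounds[of "Amax * (s' - s)"]
    by (simp add: artanh_tanh_real)
  then show ?thesis using A1_pos A1_le_Amax by (simp add: T_min_def divide_le_eq mult.commute)
qed

text \<open>G L is the rise of artanh x2 between two actions of individual 1 that are L apart,
  since y1 = exp (- r (t - s)) after an action at s.\<close>
definition A :: real where "A = (sA * a2 - sS * mS) * sC * mC"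
definition B :: real where "B = - (1 / r) * ((sA * a2 - sS * mS) * sC + sS * sC * mC)"
definition C :: real where "C = - (sS * sC) / (2 * r)"
definition G :: "real \<Rightarrow> real" where
  "G L = A * L + B * exp (- r * L) + C * exp (- 2 * r * L) - B - C"
definition sigma2 :: "real \<Rightarrow> real" where
  "sigma2 L = sA * a2 - sS * mS + sS * exp (- r * L)"

lemma M_eq_G_T: "Mconst sA sS sC mS mC r tau a1 a2 = G T"
  by (simp add: Mconst_def Let_def G_def T_def A1_def A_def B_def C_def)

lemma G_0: "G 0 = 0"
  by (simp add: G_def)

lemma G_deriv: "(G has_real_derivative sigma2 L * (sC * (exp (- r * L) + mC))) (at L within S)"
proof -
  have "exp (- 2 * r * L) = exp (- r * L) * exp (- r * L)"
    by (simp add: exp_add[symmetric])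
  then have "A + B * (exp (- r * L) * (- r)) + C * (exp (- 2 * r * L) * (- 2 * r))
      = sigma2 L * (sC * (exp (- r * L) + mC))"
    using r by (simp add: A_def B_def C_def sigma2_def field_simps)
  moreover have "(G has_real_derivative
      A + B * (exp (- r * L) * (- r)) + C * (exp (- 2 * r * L) * (- 2 * r))) (at L within S)"
    unfolding G_def[abs_def] by (auto intro!: derivative_eq_intros)
  ultimately show ?thesis by simp
qed

lemma sigma2_antimono: "antimono_on S sigma2"
  using sS r by (intro monotone_onI) (simp add: sigma2_def mult_left_mono)

lemma G_endpoint_bound:
  assumes "a < L" "L \<le> b"
  shows "G a < G L \<or> G b \<le> G L"
  by (rule deriv_antimono_factor_endpoint_bound[where s = sigma2
        and p = "\<lambda>L. sC * (exp (- r * L) + mC)", OF assms G_deriv _ sigma2_antimono])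
    (use sC mC in \<open>simp add: add_pos_pos\<close>)

lemma G_lower_bound:
  assumes "T_min \<le> L" "L \<le> T"
  shows "min (G T_min) (G T) \<le> G L"
  using G_endpoint_bound[of T_min L T] assms by (cases "L = T_min") auto

lemma G_lower_bound_pos: "0 < min (G T_min) (G T)"
  using G_endpoint_bound[OF T_min_pos T_min_le_T] M_pos M_eq_G_T G_0 by auto

lemma artanh_x2_gain:
  assumes "0 \<le> s" "s < s'" "acts tau x1 s" "acts tau x1 s'" "\<forall>u\<in>{s<..<s'}. \<not> acts tau x1 u"
    and "\<forall>u\<in>{s<..s'}. \<not> acts tau x2 u"
  shows "min (G T_min) (G T) \<le> artanh (x2 s') - artanh (x2 s)"
proof -
  define G' where "G' v = sigma2 (v - s) * (sC * (exp (- r * (v - s)) + mC))" for v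
  have G_shift_deriv: "((\<lambda>v. G (v - s)) has_real_derivative G' v) (at v within S)" for v S
  proof -
    have "((\<lambda>v. v - s) has_real_derivative 1) (at v within S)"
      by (auto intro!: derivative_eq_intros)
    from DERIV_chain2[OF G_deriv this] show ?thesis by (simp add: G'_def)
  qed
  have "I2.rate v = G' v" if "s \<le> v" "v < s'" for v
  proof -
    have "y1 v = exp (- r * (v - s))" using I1.y_decay[of s v] I1.reset[of s] assms that by auto
    then show ?thesis by (simp add: I2.rate_def G'_def sigma2_def algebra_simps)
  qed
  moreover have "continuous_on {s..s'} (\<lambda>v. G (v - s))"
    using G_shift_deriv by (intro continuous_at_imp_continuous_on ballI DERIV_isCont)
  ultimately have "G (s' - s) - G (s - s) \<le> artanh (x2 s') - artanh (x2 s)"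
    using assms x2_greater_neg1 G_shift_deriv by (intro I2.artanh_x_increment_ge) auto
  moreover have "min (G T_min) (G T) \<le> G (s' - s)"
    using T_min_le_inter_action_time[OF assms(1-5)] inter_action_time_le_T[OF assms(1-3,5)]
    by (rule G_lower_bound)
  ultimately show ?thesis using G_0 by simp
qed

lemma acts2_after: "\<exists>t\<ge>t0. acts tau x2 t"
proof (rule ccontr)
  assume "\<not> (\<exists>t\<ge>t0. acts tau x2 t)"
  then have quiet2: "\<And>u. t0 \<le> u \<Longrightarrow> \<not> acts tau x2 u" by auto
  obtain s0 where s0: "max t0 0 \<le> s0" "acts tau x1 s0" using acts1_after by blast
  define g where "g = min (G T_min) (G T)"
  have climb: "\<exists>s\<ge>s0. acts tau x1 s \<and> artanh (x2 s0) + real k * g \<le> artanh (x2 s)" for k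
  proof (induction k)
    case 0
    then show ?case using s0 by auto
  next
    case (Suc k)
    then obtain s where s: "s0 \<le> s" "acts tau x1 s" "artanh (x2 s0) + real k * g \<le> artanh (x2 s)"
      by blast
    with s0 obtain s' where s': "s < s'" "acts tau x1 s'" "\<forall>u\<in>{s<..<s'}. \<not> acts tau x1 u"
      using x1_next_act[of s] by auto
    with s s0 quiet2 have "g \<le> artanh (x2 s') - artanh (x2 s)"
      unfolding g_def by (intro artanh_x2_gain) auto
    with s s' show ?case by (intro exI[of _ s']) (auto simp: algebra_simps)
  qed
  obtain k where "artanh tau - artanh (x2 s0) < real k * g"
    using ex_less_of_nat_mult G_lower_bound_pos unfolding g_def by blast
  moreover obtain s where "s0 \<le> s" "artanh (x2 s0) + real k * g \<le> artanh (x2 s)"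
    using climb[of k] by blast
  ultimately show False using artanh_x2_less[of s] s0 by simp
qed

end

theorem theorem3:
  fixes sA sS sC mS mC r tau a1 a2 :: real
    and x1 x2 y1 y2 :: "real \<Rightarrow> real"
  assumes "sA \<ge> 0" "sS \<ge> 0" "sC > 0" "0 \<le> mS" "mS \<le> 1" "mC > 0" "r > 0"
    and "0 < tau" "tau < 1"
    and "-1 < a1" "a1 < 1" "-1 < a2" "a2 < 1"
    and h1: "sA * a1 - sS * mS > 0"
    and h2: "sA * a2 - sS * mS \<le> 0"
    and h3: "x1 0 = 0" "y1 0 = 0" "y2 0 = 0" "-1 < x2 0" "x2 0 < tau"
    and sys: "system2 sA sS sC mS mC r tau a1 a2 x1 x2 y1 y2"
    and M: "Mconst sA sS sC mS mC r tau a1 a2 > 0"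
  shows "\<forall>tstart\<ge>0. infinite {t. acts tau x1 t \<and> t \<ge> tstart}
                   \<and> infinite {t. acts tau x2 t \<and> t \<ge> tstart}"
proof -
  interpret two_individuals sA sS sC mS mC r tau a1 a2 x1 x2 y1 y2
    by unfold_locales (use assms in auto)
  show ?thesis
    by (intro allI impI conjI infinite_if_unbounded acts1_after acts2_after)
qed

end
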